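(* For all $n\geq1$ and all formulas $\phi,\chi_1,\dots,\chi_n\in\mathcal{L}(\nabla,\bullet)$, $$\vdash_{\mathbf{K}^{\nabla\bullet}}\Delta\Big(\bigwedge_{k=1}^n\chi_k\to\phi\Big)\land\bigwedge_{k=1}^n\circ(\neg\phi\to\chi_k)\land\phi\to\Delta\phi.$$
   Context: $\mathcal{L}(\nabla,\bullet)$: $\phi::=p\mid\neg\phi\mid\phi\land\phi\mid\nabla\phi\mid\bullet\phi$ over a nonempty set of propositional variables; $\Delta\phi:=\neg\nabla\phi$, $\circ\phi:=\neg\bullet\phi$. The Hilbert system $\mathbf{K}^{\nabla\bullet}$ has axioms: A0 all instances of propositional tautologies; A1 $\bullet\phi\to\phi$; A2 $\nabla\phi\leftrightarrow\nabla\neg\phi$; A3 $\bullet(\psi\to\phi)\land\phi\to\bullet\phi$; A4 $\nabla(\phi\land\psi)\to\nabla\phi\vee\nabla\psi$; A5 $\bullet(\phi\land\psi)\to\bullet\phi\vee\bullet\psi$; A6 $\nabla\phi\to\bullet\phi\vee\bullet\neg\phi$; A7 $\bullet(\phi\to\psi)\land\bullet(\neg\phi\to\chi)\to\nabla\phi$; and rules: R1 from $\phi$ infer $\Delta\phi$; R2 from $\phi$ infer $\circ\phi$; R3 from $\phi\leftrightarrow\psi$ infer $\Delta\phi\leftrightarrow\Delta\psi$; R4 from $\phi\leftrightarrow\psi$ infer $\circ\phi\leftrightarrow\circ\psi$; MP. *)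

theory Defs
  imports Main
begin

datatype 'a fm = Var 'a | Neg "'a fm" | Conj "'a fm" "'a fm" | Nab "'a fm" | Bul "'a fm"

definition Disj :: "'a fm \<Rightarrow> 'a fm \<Rightarrow> 'a fm" where
  "Disj p q = Neg (Conj (Neg p) (Neg q))"
definition Imp :: "'a fm \<Rightarrow> 'a fm \<Rightarrow> 'a fm" where
  "Imp p q = Neg (Conj p (Neg q))"
definition Iff :: "'a fm \<Rightarrow> 'a fm \<Rightarrow> 'a fm" where
  "Iff p q = Conj (Imp p q) (Imp q p)"
definition Delta :: "'a fm \<Rightarrow> 'a fm" where
  "Delta p = Neg (Nab p)"
definition Circ :: "'a fm \<Rightarrow> 'a fm" where
  "Circ p = Neg (Bul p)"

fun peval :: "('a fm \<Rightarrow> bool) \<Rightarrow> 'a fm \<Rightarrow> bool" where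
  "peval v (Var p) = v (Var p)"
| "peval v (Neg f) = (\<not> peval v f)"
| "peval v (Conj f g) = (peval v f \<and> peval v g)"
| "peval v (Nab f) = v (Nab f)"
| "peval v (Bul f) = v (Bul f)"

definition taut :: "'a fm \<Rightarrow> bool" where
  "taut f = (\<forall>v. peval v f)"

inductive deriv :: "'a fm \<Rightarrow> bool" where
  A0: "taut f \<Longrightarrow> deriv f"
| A1: "deriv (Imp (Bul f) f)"
| A2: "deriv (Iff (Nab f) (Nab (Neg f)))"
| A3: "deriv (Imp (Conj (Bul (Imp g f)) f) (Bul f))"
| A4: "deriv (Imp (Nab (Conj f g)) (Disj (Nab f) (Nab g)))"
| A5: "deriv (Imp (Bul (Conj f g)) (Disj (Bul f) (Bul g)))"
| A6: "deriv (Imp (Nab f) (Disj (Bul f) (Bul (Neg f))))"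
| A7: "deriv (Imp (Conj (Bul (Imp f g)) (Bul (Imp (Neg f) h))) (Nab f))"
| R1: "deriv f \<Longrightarrow> deriv (Delta f)"
| R2: "deriv f \<Longrightarrow> deriv (Circ f)"
| R3: "deriv (Iff f g) \<Longrightarrow> deriv (Iff (Delta f) (Delta g))"
| R4: "deriv (Iff f g) \<Longrightarrow> deriv (Iff (Circ f) (Circ g))"
| MP: "deriv f \<Longrightarrow> deriv (Imp f g) \<Longrightarrow> deriv g"

fun BigConj :: "'a fm list \<Rightarrow> 'a fm" where
  "BigConj [x] = x"
| "BigConj (x # xs) = Conj x (BigConj xs)"
| "BigConj [] = Neg (Conj (Var undefined) (Neg (Var undefined)))"

end

theory Submission
  imports Defs
begin

text \<open>Since \<open>\<phi>\<close> is equivalent to \<open>(\<chi> \<rightarrow> \<phi>) \<and> (\<not>\<phi> \<rightarrow> \<chi>)\<close> with \<open>\<chi> = \<And>\<^sub>k \<chi>\<^sub>k\<close>,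
  A4 turns \<open>\<nabla>\<phi>\<close> into \<open>\<nabla>(\<chi> \<rightarrow> \<phi>)\<close>, excluded by the first hypothesis, or \<open>\<nabla>(\<not>\<phi> \<rightarrow> \<chi>)\<close>.
  By A6 the latter gives either \<open>\<bullet>(\<not>\<phi> \<rightarrow> \<chi>)\<close>, which by A5 yields some
  \<open>\<bullet>(\<not>\<phi> \<rightarrow> \<chi>\<^sub>k)\<close> against the \<open>\<circ>\<close>-hypotheses, or \<open>\<bullet>\<not>(\<not>\<phi> \<rightarrow> \<chi>)\<close>, which by A1
  yields \<open>\<not>\<phi>\<close> against \<open>\<phi>\<close>.\<close>

lemmas fm_abbrev_defs = taut_def Imp_def Iff_def Disj_def Delta_def Circ_def

lemma deriv_taut_consequence1:
  "deriv a \<Longrightarrow> taut (Imp a c) \<Longrightarrow> deriv c"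
  using deriv.A0 deriv.MP by blast

lemma deriv_taut_consequence2:
  "deriv a \<Longrightarrow> deriv b \<Longrightarrow> taut (Imp a (Imp b c)) \<Longrightarrow> deriv c"
  using deriv.A0 deriv.MP by blast

lemma deriv_taut_consequence4:
  "deriv a \<Longrightarrow> deriv b \<Longrightarrow> deriv d \<Longrightarrow> deriv e
   \<Longrightarrow> taut (Imp a (Imp b (Imp d (Imp e c)))) \<Longrightarrow> deriv c"
  using deriv.A0 deriv.MP by blast

lemma deriv_Bul_cong: "taut (Iff f g) \<Longrightarrow> deriv (Iff (Bul f) (Bul g))"
proof -
  assume "taut (Iff f g)"
  then have "deriv (Iff (Circ f) (Circ g))" by (intro deriv.R4 deriv.A0)
  then show ?thesis by (rule deriv_taut_consequence1) (auto simp: fm_abbrev_defs)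
qed

lemma deriv_Nab_cong: "taut (Iff f g) \<Longrightarrow> deriv (Iff (Nab f) (Nab g))"
proof -
  assume "taut (Iff f g)"
  then have "deriv (Iff (Delta f) (Delta g))" by (intro deriv.R3 deriv.A0)
  then show ?thesis by (rule deriv_taut_consequence1) (auto simp: fm_abbrev_defs)
qed

lemma deriv_Bul_imp_BigConj_imp_not_Circs:
  assumes "chis \<noteq> []"
  shows "deriv (Imp (Bul (Imp psi (BigConj chis)))
                    (Neg (BigConj (map (\<lambda>c. Circ (Imp psi c)) chis))))"
  using assms
proof (induction chis rule: BigConj.induct)
  case (1 x)
  show ?case by (rule deriv.A0) (auto simp: fm_abbrev_defs)
next
  case (2 x y zs)
  let ?B = "BigConj (y # zs)"
  have IH: "deriv (Imp (Bul (Imp psi ?B))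
                       (Neg (BigConj (map (\<lambda>c. Circ (Imp psi c)) (y # zs)))))"
    using 2 by simp
  have distrib: "deriv (Iff (Bul (Imp psi (Conj x ?B)))
                            (Bul (Conj (Imp psi x) (Imp psi ?B))))"
    by (rule deriv_Bul_cong) (auto simp: fm_abbrev_defs)
  have split: "deriv (Imp (Bul (Conj (Imp psi x) (Imp psi ?B)))
                          (Disj (Bul (Imp psi x)) (Bul (Imp psi ?B))))"
    by (rule deriv.A5)
  show ?case
    by simp (rule deriv_taut_consequence4[OF IH distrib split IH], auto simp: fm_abbrev_defs)
next
  case 3
  then show ?case by simp
qed

lemma deriv_Nab_imp_Nab_split:
  "deriv (Imp (Nab phi) (Disj (Nab (Imp chi phi)) (Nab (Imp (Neg phi) chi))))"
proof -
  have "deriv (Iff (Nab phi) (Nab (Conj (Imp chi phi) (Imp (Neg phi) chi))))"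
    by (rule deriv_Nab_cong) (auto simp: fm_abbrev_defs)
  moreover have "deriv (Imp (Nab (Conj (Imp chi phi) (Imp (Neg phi) chi)))
                            (Disj (Nab (Imp chi phi)) (Nab (Imp (Neg phi) chi))))"
    by (rule deriv.A4)
  ultimately show ?thesis
    by (rule deriv_taut_consequence2) (auto simp: fm_abbrev_defs)
qed

theorem proposition8:
  fixes phi :: "'a fm" and chis :: "'a fm list"
  assumes "length chis \<ge> 1"
  shows "deriv (Imp (Conj (Conj (Delta (Imp (BigConj chis) phi))
                               (BigConj (map (\<lambda>c. Circ (Imp (Neg phi) c)) chis)))
                         phi)
                   (Delta phi))"
proof -
  let ?psi = "Imp (Neg phi) (BigConj chis)"
  have "chis \<noteq> []" using assms by auto
  then have Bul_refuted:
    "deriv (Imp (Bul ?psi) (Neg (BigConj (map (\<lambda>c. Circ (Imp (Neg phi) c)) chis))))"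
    by (rule deriv_Bul_imp_BigConj_imp_not_Circs)
  have Nab_split: "deriv (Imp (Nab phi)
      (Disj (Nab (Imp (BigConj chis) phi)) (Nab ?psi)))"
    by (rule deriv_Nab_imp_Nab_split)
  have "deriv (Imp (Nab ?psi) (Disj (Bul ?psi) (Bul (Neg ?psi))))"
    by (rule deriv.A6)
  moreover have "deriv (Imp (Bul (Neg ?psi)) (Neg ?psi))"
    by (rule deriv.A1)
  ultimately show ?thesis
    by (rule deriv_taut_consequence4[OF Nab_split _ _ Bul_refuted]) (auto simp: fm_abbrev_defs)
qed

end
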